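(* Let $G=(\mathcal V,\mathcal E,a)$ and $G'=(\mathcal V',\mathcal E',a')$ be finite undirected graphs with discrete node attributes, let $u\in\mathcal V$, $u'\in\mathcal V'$ and $k\ge0$. If $\mathcal M(u,u')\neq\emptyset$, then $$\kappa^{(k+1)}_{\mathrm{subtree}}(u,u')=\delta(a(u),a'(u'))\max_{R\in\mathcal M(u,u')}\prod_{(v,v')\in R}\kappa^{(k)}_{\mathrm{subtree}}(v,v').$$
   Context: $\mathcal N(u)$ denotes the neighbors of $u$; $\delta$ is the Dirac kernel. Weisfeiler–Lehman relabeling: $a_0=a$, and $a_{i}(u)=f\big(a_{i-1}(u),\{\!\{a_{i-1}(v):v\in\mathcal N(u)\}\!\}\big)$ with $f$ an injective relabeling function shared by both graphs (similarly $a'_i$ on $G'$); $\kappa^{(i)}_{\mathrm{subtree}}(u,u')=\delta(a_i(u),a'_i(u'))$. $\mathcal M(u,u')$ is the set of sets $R\subseteq\mathcal N(u)\times\mathcal N(u')$ with $|R|=|\mathcal N(u)|=|\mathcal N(u')|$, such that for all $(v,v'),(w,w')\in R$, $v=w\Leftrightarrow v'=w'$, and $a(v)=a'(v')$ for all $(v,v')\in R$. An empty product equals $1$. *)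

theory Defs
  imports Complex_Main "HOL-Library.Multiset"
begin

text \<open>A graph is a finite vertex set V with a symmetric edge relation E \<subseteq> V \<times> V;
  neighbours of u:\<close>
definition nbrs :: "('v \<times> 'v) set \<Rightarrow> 'v \<Rightarrow> 'v set" where
  "nbrs E u = {v. (u, v) \<in> E}"

fun wl :: "('l \<times> 'l multiset \<Rightarrow> 'l) \<Rightarrow> ('v \<times> 'v) set \<Rightarrow> ('v \<Rightarrow> 'l) \<Rightarrow> nat \<Rightarrow> 'v \<Rightarrow> 'l" where
  "wl f E a 0 u = a u"
| "wl f E a (Suc i) u = f (wl f E a i u, image_mset (wl f E a i) (mset_set (nbrs E u)))"

definition dirac :: "'a \<Rightarrow> 'a \<Rightarrow> real" where
  "dirac x y = (if x = y then 1 else 0)"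

definition k_subtree ::
  "('l \<times> 'l multiset \<Rightarrow> 'l) \<Rightarrow> ('v \<times> 'v) set \<Rightarrow> ('v \<Rightarrow> 'l) \<Rightarrow> ('w \<times> 'w) set \<Rightarrow> ('w \<Rightarrow> 'l)
    \<Rightarrow> nat \<Rightarrow> 'v \<Rightarrow> 'w \<Rightarrow> real" where
  "k_subtree f E a E' a' i u u' = dirac (wl f E a i u) (wl f E' a' i u')"

definition matchings ::
  "('v \<times> 'v) set \<Rightarrow> ('v \<Rightarrow> 'l) \<Rightarrow> ('w \<times> 'w) set \<Rightarrow> ('w \<Rightarrow> 'l) \<Rightarrow> 'v \<Rightarrow> 'w \<Rightarrow> ('v \<times> 'w) set set" where
  "matchings E a E' a' u u' =
    {R. R \<subseteq> nbrs E u \<times> nbrs E' u'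
       \<and> card R = card (nbrs E u) \<and> card R = card (nbrs E' u')
       \<and> (\<forall>(v, v') \<in> R. \<forall>(w, w') \<in> R. v = w \<longleftrightarrow> v' = w')
       \<and> (\<forall>(v, v') \<in> R. a v = a' v')}"

end

theory Submission
  imports Defs
begin

(* Injectivity of f makes a_(k+1)(u) = a'_(k+1)(u') equivalent to a(u) = a'(u') together with
   equality of the multisets of level-k labels on the two neighbourhoods, because every level of
   labels refines the lower ones. A matching is the graph of a bijection between the
   neighbourhoods, and the product over it is the indicator that this bijection preserves level-k
   labels; such a bijection exists iff the two multisets agree. So the maximum over the nonempty
   finite set of matchings is exactly that indicator. *)

lemma image_mset_eq_implies_bij_betw:
  assumes "finite A" "finite B" "image_mset g (mset_set A) = image_mset h (mset_set B)"
  obtains \<phi> where "bij_betw \<phi> A B" "\<forall>x\<in>A. g x = h (\<phi> x)"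
proof -
  have "\<exists>\<phi>. bij_betw \<phi> A B \<and> (\<forall>x\<in>A. g x = h (\<phi> x))"
    using assms
  proof (induction A arbitrary: B rule: finite_induct)
    case empty
    then have "B = {}"
      by (metis image_mset_is_empty_iff mset_set.empty mset_set_empty_iff)
    then show ?case by (auto simp: bij_betw_def)
  next
    case (insert x A)
    have "g x \<in># image_mset h (mset_set B)"
      using insert.prems insert.hyps by (metis mset_set.insert image_mset_add_mset union_single_eq_member)
    then obtain y where y: "y \<in> B" "h y = g x"
      using insert.prems by auto
    have "mset_set B = add_mset y (mset_set (B - {y}))"
      using y insert.prems by (simp add: mset_set.remove)
    then have "image_mset g (mset_set A) = image_mset h (mset_set (B - {y}))"
      using insert y by simp
    then obtain \<phi> where \<phi>: "bij_betw \<phi> A (B - {y})" "\<forall>x\<in>A. g x = h (\<phi> x)"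
      using insert.IH insert.prems by blast
    have "bij_betw (\<phi>(x := y)) A (B - {y})"
      using \<phi>(1) insert.hyps by (metis bij_betw_cong fun_upd_other)
    then have "bij_betw (\<phi>(x := y)) (A \<union> {x}) ((B - {y}) \<union> {y})"
      using insert.hyps by (metis notIn_Un_bij_betw Diff_iff fun_upd_same insertI1)
    then have "bij_betw (\<phi>(x := y)) (insert x A) B"
      using y by (simp add: insert_absorb)
    then show ?case
      using \<phi> y insert.hyps by auto
  qed
  then show thesis using that by blast
qed

lemma image_mset_mset_set_card_eq:
  assumes "finite N" "inj_on p R" "p ` R \<subseteq> N" "card R = card N"
  shows "image_mset p (mset_set R) = mset_set N"
proof -
  have "p ` R = N"
    using assms by (simp add: card_image card_subset_eq)
  then show ?thesis
    using image_mset_mset_set[OF assms(2)] by simp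
qed

lemma prod_dirac:
  assumes "finite R"
  shows "(\<Prod>(v, v') \<in> R. dirac (g v) (h v')) = of_bool (\<forall>(v, v') \<in> R. g v = h v')"
  using assms by (induction R rule: finite_induct) (auto simp: dirac_def)

lemma Max_of_bool_image:
  assumes "finite M" "M \<noteq> {}"
  shows "Max ((\<lambda>x. of_bool (P x)) ` M) = (of_bool (\<exists>x\<in>M. P x) :: 'a :: linordered_semidom)"
  using assms by (cases "\<exists>x\<in>M. P x") (auto intro!: Max_eqI)

lemma wl_Suc_eq_iff:
  assumes "inj f"
  shows "wl f E a (Suc i) u = wl f E' a' (Suc i) u' \<longleftrightarrow>
    wl f E a i u = wl f E' a' i u' \<and>
    image_mset (wl f E a i) (mset_set (nbrs E u)) = image_mset (wl f E' a' i) (mset_set (nbrs E' u'))"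
  using assms by (auto dest: injD)

lemma wl_eq_imp_label_eq:
  assumes "inj f" "wl f E a k u = wl f E' a' k u'"
  shows "a u = a' u'"
  using assms(2)
proof (induction k arbitrary: u u')
  case (Suc k)
  then show ?case
    using wl_Suc_eq_iff[OF assms(1), of E a k u E' a' u'] by blast
qed simp

lemma wl_0_eq: "wl f E a 0 = a"
  by (rule ext) simp

lemma wl_eq_fst_inv_wl_Suc:
  assumes "inj f"
  shows "wl f E a i = fst \<circ> inv f \<circ> wl f E a (Suc i)"
  using assms by auto

lemma image_mset_wl_Suc_eq_imp:
  assumes "inj f" "image_mset (wl f E a (Suc i)) M = image_mset (wl f E' a' (Suc i)) M'"
  shows "image_mset (wl f E a i) M = image_mset (wl f E' a' i) M'"
  using arg_cong[OF assms(2), of "image_mset (fst \<circ> inv f)"]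
  by (simp add: image_mset.compositionality flip: comp_assoc wl_eq_fst_inv_wl_Suc[OF assms(1)])

lemma wl_Suc_eq_iff_label_eq_and_image_mset_eq:
  assumes "inj f"
  shows "wl f E a (Suc k) u = wl f E' a' (Suc k) u' \<longleftrightarrow>
    a u = a' u' \<and>
    image_mset (wl f E a k) (mset_set (nbrs E u)) = image_mset (wl f E' a' k) (mset_set (nbrs E' u'))"
proof (induction k)
  case 0
  show ?case
    using wl_Suc_eq_iff[OF assms, of E a 0 u E' a' u'] by (simp only: wl_0_eq)
next
  case (Suc k)
  then show ?case
    using wl_Suc_eq_iff[OF assms, of E a "Suc k" u E' a' u']
      wl_eq_imp_label_eq[OF assms, of E a "Suc k" u E' a' u']
      image_mset_wl_Suc_eq_imp[OF assms, of E a k _ E' a']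
    by blast
qed

lemma k_subtree_Suc_eq:
  assumes "inj f"
  shows "k_subtree f E a E' a' (Suc k) u u' = dirac (a u) (a' u') *
    of_bool (image_mset (wl f E a k) (mset_set (nbrs E u))
             = image_mset (wl f E' a' k) (mset_set (nbrs E' u')))"
  unfolding k_subtree_def dirac_def wl_Suc_eq_iff_label_eq_and_image_mset_eq[OF assms] by simp

lemma finite_nbrs: "finite V \<Longrightarrow> E \<subseteq> V \<times> V \<Longrightarrow> finite (nbrs E u)"
  unfolding nbrs_def by (auto intro: finite_subset)

lemma finite_matchings:
  "finite (nbrs E u) \<Longrightarrow> finite (nbrs E' u') \<Longrightarrow> finite (matchings E a E' a' u u')"
  by (rule finite_subset[of _ "Pow (nbrs E u \<times> nbrs E' u')"]) (auto simp: matchings_def)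

lemma finite_matching:
  "R \<in> matchings E a E' a' u u' \<Longrightarrow> finite (nbrs E u) \<Longrightarrow> finite (nbrs E' u') \<Longrightarrow> finite R"
  by (rule finite_subset[of R "nbrs E u \<times> nbrs E' u'"]) (auto simp: matchings_def)

lemma matching_imp_image_mset_eq:
  assumes R: "R \<in> matchings E a E' a' u u'"
    and fin: "finite (nbrs E u)" "finite (nbrs E' u')"
    and resp: "\<forall>(v, v') \<in> R. g v = h v'"
  shows "image_mset g (mset_set (nbrs E u)) = image_mset h (mset_set (nbrs E' u'))"
proof -
  have "inj_on fst R" "inj_on snd R"
    using R unfolding matchings_def inj_on_def by fastforce+
  moreover have "fst ` R \<subseteq> nbrs E u" "snd ` R \<subseteq> nbrs E' u'"
    "card R = card (nbrs E u)" "card R = card (nbrs E' u')"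
    using R unfolding matchings_def by auto
  ultimately have fst: "image_mset fst (mset_set R) = mset_set (nbrs E u)"
    and snd: "image_mset snd (mset_set R) = mset_set (nbrs E' u')"
    using image_mset_mset_set_card_eq fin by metis+
  have "image_mset g (mset_set (nbrs E u)) = image_mset (g \<circ> fst) (mset_set R)"
    by (simp add: fst flip: image_mset.compositionality)
  also have "\<dots> = image_mset (h \<circ> snd) (mset_set R)"
    using resp finite_matching[OF R fin] by (intro image_mset_cong) auto
  also have "\<dots> = image_mset h (mset_set (nbrs E' u'))"
    by (simp add: snd flip: image_mset.compositionality)
  finally show ?thesis .
qed

lemma graph_of_bij_betw_in_matchings:
  assumes bij: "bij_betw \<phi> (nbrs E u) (nbrs E' u')"
    and labels: "\<forall>v \<in> nbrs E u. a v = a' (\<phi> v)"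
  shows "(\<lambda>v. (v, \<phi> v)) ` nbrs E u \<in> matchings E a E' a' u u'"
proof -
  let ?R = "(\<lambda>v. (v, \<phi> v)) ` nbrs E u"
  have inj: "inj_on \<phi> (nbrs E u)"
    using bij by (rule bij_betw_imp_inj_on)
  have "?R \<subseteq> nbrs E u \<times> nbrs E' u'"
    using bij by (auto dest: bij_betwE)
  moreover have "card ?R = card (nbrs E u)"
    by (simp add: card_image inj_on_def)
  moreover have "card (nbrs E u) = card (nbrs E' u')"
    using bij by (rule bij_betw_same_card)
  moreover have "\<forall>(v, v') \<in> ?R. \<forall>(w, w') \<in> ?R. v = w \<longleftrightarrow> v' = w'"
    using inj by (auto dest: inj_onD)
  moreover have "\<forall>(v, v') \<in> ?R. a v = a' v'"
    using labels by auto
  ultimately show ?thesis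
    unfolding matchings_def by simp
qed

lemma ex_matching_respecting_wl_iff:
  assumes "inj f" "finite (nbrs E u)" "finite (nbrs E' u')"
  shows "(\<exists>R \<in> matchings E a E' a' u u'. \<forall>(v, v') \<in> R. wl f E a k v = wl f E' a' k v') \<longleftrightarrow>
    image_mset (wl f E a k) (mset_set (nbrs E u)) = image_mset (wl f E' a' k) (mset_set (nbrs E' u'))"
proof
  assume "\<exists>R \<in> matchings E a E' a' u u'. \<forall>(v, v') \<in> R. wl f E a k v = wl f E' a' k v'"
  then obtain R where R: "R \<in> matchings E a E' a' u u'"
    and respects: "\<forall>(v, v') \<in> R. wl f E a k v = wl f E' a' k v'"
    by blast
  show "image_mset (wl f E a k) (mset_set (nbrs E u)) = image_mset (wl f E' a' k) (mset_set (nbrs E' u'))"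
    by (rule matching_imp_image_mset_eq[OF R assms(2,3) respects])
next
  assume "image_mset (wl f E a k) (mset_set (nbrs E u)) = image_mset (wl f E' a' k) (mset_set (nbrs E' u'))"
  with assms(2,3) obtain \<phi> where \<phi>: "bij_betw \<phi> (nbrs E u) (nbrs E' u')"
      "\<forall>v \<in> nbrs E u. wl f E a k v = wl f E' a' k (\<phi> v)"
    by (rule image_mset_eq_implies_bij_betw)
  have "\<forall>v \<in> nbrs E u. a v = a' (\<phi> v)"
    using \<phi>(2) wl_eq_imp_label_eq[OF assms(1), of E a k _ E' a'] by blast
  with \<phi>(1) have "(\<lambda>v. (v, \<phi> v)) ` nbrs E u \<in> matchings E a E' a' u u'"
    by (rule graph_of_bij_betw_in_matchings)
  moreover have "\<forall>(v, v') \<in> (\<lambda>v. (v, \<phi> v)) ` nbrs E u. wl f E a k v = wl f E' a' k v'"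
    using \<phi>(2) by auto
  ultimately show "\<exists>R \<in> matchings E a E' a' u u'. \<forall>(v, v') \<in> R. wl f E a k v = wl f E' a' k v'"
    by blast
qed

theorem lemma1:
  fixes V :: "'v set" and E :: "('v \<times> 'v) set" and a :: "'v \<Rightarrow> 'l"
    and V' :: "'w set" and E' :: "('w \<times> 'w) set" and a' :: "'w \<Rightarrow> 'l"
    and f :: "'l \<times> 'l multiset \<Rightarrow> 'l" and u :: 'v and u' :: 'w and k :: nat
  assumes "finite V" "E \<subseteq> V \<times> V" "sym E"
    and "finite V'" "E' \<subseteq> V' \<times> V'" "sym E'"
    and "inj f"
    and "u \<in> V" "u' \<in> V'"
    and "matchings E a E' a' u u' \<noteq> {}"
  shows "k_subtree f E a E' a' (Suc k) u u'
         = dirac (a u) (a' u') *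
           Max ((\<lambda>R. \<Prod>(v, v') \<in> R. k_subtree f E a E' a' k v v') ` matchings E a E' a' u u')"
proof -
  let ?M = "matchings E a E' a' u u'"
  let ?respects = "\<lambda>R. \<forall>(v, v') \<in> R. wl f E a k v = wl f E' a' k v'"
  have fin: "finite (nbrs E u)" "finite (nbrs E' u')"
    using assms(1,2,4,5) by (auto intro: finite_nbrs)
  have "(\<Prod>(v, v') \<in> R. k_subtree f E a E' a' k v v') = of_bool (?respects R)" if "R \<in> ?M" for R
    unfolding k_subtree_def using prod_dirac[OF finite_matching[OF that fin]] .
  then have "Max ((\<lambda>R. \<Prod>(v, v') \<in> R. k_subtree f E a E' a' k v v') ` ?M)
      = Max ((\<lambda>R. of_bool (?respects R)) ` ?M)"
    by (simp cong: image_cong)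
  also have "\<dots> = of_bool (\<exists>R \<in> ?M. ?respects R)"
    using finite_matchings[OF fin] assms(10) by (rule Max_of_bool_image)
  also have "\<dots> = of_bool (image_mset (wl f E a k) (mset_set (nbrs E u))
                            = image_mset (wl f E' a' k) (mset_set (nbrs E' u')))"
    by (simp only: ex_matching_respecting_wl_iff[OF assms(7) fin])
  finally show ?thesis
    unfolding k_subtree_Suc_eq[OF assms(7)] by simp
qed

end
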